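(* Let $C=U_d\cdots U_1$ be a Clifford circuit of depth $d$ on $n$ qubits and $\tilde{\mathcal C}=\mathcal E^{\otimes n}\circ\mathcal U_d\circ\mathcal E^{\otimes n}\circ\cdots\circ\mathcal U_1\circ\mathcal E^{\otimes n}$ its noisy implementation, with $\mathcal U_t(\cdot)=U_t(\cdot)U_t^\dagger$ and $\mathcal E(\sigma)=(1-\gamma)\sigma+\gamma\frac I2\operatorname{Tr}(\sigma)$. For $y\in\{0,1\}^n$ let $p_{\tilde{\mathcal C},y}(x)=\operatorname{Tr}(F_x\tilde{\mathcal C}(\lvert y\rangle\langle y\rvert))$, where $F_x=U^\dagger\lvert x\rangle\langle x\rvert U$ for an arbitrary fixed measurement basis given by a unitary $U$. Then when $d\ge O(\gamma^{-1}\log n)$, $$\mathbb E_{y\sim\{0,1\}^n}\sum_{x\in\{0,1\}^n}p_{\tilde{\mathcal C},y}(x)^2=\frac{O(1)}{2^n},$$ where $y$ is uniformly distributed.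
   Context: The Clifford group consists of unitaries mapping Pauli operators to Pauli operators under conjugation. *)

theory Defs
  imports Complex_Main "Jordan_Normal_Form.Matrix"
begin

text \<open>n-qubit operators are complex 2^n x 2^n matrices. A basis index r < 2^n
  encodes the bit string (bit 0 r, ..., bit (n-1) r); qubit k is bit k.\<close>

definition qbit :: "nat \<Rightarrow> nat \<Rightarrow> nat" where
  "qbit k r = (r div 2 ^ k) mod 2"

definition set_qbit :: "nat \<Rightarrow> nat \<Rightarrow> nat \<Rightarrow> nat" where
  "set_qbit k r b = r - qbit k r * 2 ^ k + b * 2 ^ k"

definition dagger :: "complex mat \<Rightarrow> complex mat" where
  "dagger A = mat (dim_col A) (dim_row A) (\<lambda>(i, j). cnj (A $$ (j, i)))"

definition unitary_op :: "nat \<Rightarrow> complex mat \<Rightarrow> bool" where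
  "unitary_op N V \<longleftrightarrow> V \<in> carrier_mat N N \<and> V * dagger V = 1\<^sub>m N \<and> dagger V * V = 1\<^sub>m N"

text \<open>Single-qubit Paulis: index 0 = I, 1 = X, 2 = Y, 3 = Z; entry (a,b).\<close>
definition pauli1 :: "nat \<Rightarrow> nat \<Rightarrow> nat \<Rightarrow> complex" where
  "pauli1 p a b =
     (if p = 0 then (if a = b then 1 else 0)
      else if p = 1 then (if a \<noteq> b then 1 else 0)
      else if p = 2 then (if a = 0 \<and> b = 1 then - \<i> else if a = 1 \<and> b = 0 then \<i> else 0)
      else (if a = b then (if a = 0 then 1 else -1) else 0))"

definition pauli_string :: "nat \<Rightarrow> (nat \<Rightarrow> nat) \<Rightarrow> complex mat" where
  "pauli_string n s = mat (2 ^ n) (2 ^ n)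
     (\<lambda>(r, c). \<Prod>k<n. pauli1 (s k) (qbit k r) (qbit k c))"

definition pauli_group :: "nat \<Rightarrow> complex mat set" where
  "pauli_group n = {ph \<cdot>\<^sub>m pauli_string n s | ph s.
      ph \<in> {1, -1, \<i>, -\<i>} \<and> (\<forall>k<n. s k < 4)}"

definition clifford :: "nat \<Rightarrow> complex mat \<Rightarrow> bool" where
  "clifford n V \<longleftrightarrow> unitary_op (2 ^ n) V \<and>
     (\<forall>P \<in> pauli_group n. V * P * dagger V \<in> pauli_group n)"

text \<open>Single-qubit depolarizing channel E(s) = (1-g) s + g (I/2) Tr(s) applied to qubit k
  of a 2^n x 2^n operator (i.e. id (x) E (x) id).\<close>
definition depol_qubit :: "real \<Rightarrow> nat \<Rightarrow> nat \<Rightarrow> complex mat \<Rightarrow> complex mat" where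
  "depol_qubit g n k \<rho> = mat (2 ^ n) (2 ^ n) (\<lambda>(r, c).
      complex_of_real (1 - g) * \<rho> $$ (r, c)
      + (if qbit k r = qbit k c
         then complex_of_real (g / 2) *
              (\<Sum>b\<in>{0, 1::nat}. \<rho> $$ (set_qbit k r b, set_qbit k c b))
         else 0))"

text \<open>E^{\<otimes> m} on the first m qubits (composition of commuting single-qubit channels);
  the full channel E^{\<otimes> n} is depol_all g n n.\<close>
fun depol_all :: "real \<Rightarrow> nat \<Rightarrow> nat \<Rightarrow> complex mat \<Rightarrow> complex mat" where
  "depol_all g n 0 \<rho> = \<rho>"
| "depol_all g n (Suc k) \<rho> = depol_qubit g n k (depol_all g n k \<rho>)"

text \<open>Noisy circuit: layer t+1 is the unitary Us t.
  noisy_circuit g n Us d = E^n o U_d o E^n o ... o U_1 o E^n.\<close>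
fun noisy_circuit :: "real \<Rightarrow> nat \<Rightarrow> (nat \<Rightarrow> complex mat) \<Rightarrow> nat \<Rightarrow> complex mat \<Rightarrow> complex mat" where
  "noisy_circuit g n Us 0 \<rho> = depol_all g n n \<rho>"
| "noisy_circuit g n Us (Suc t) \<rho> =
     depol_all g n n (Us t * noisy_circuit g n Us t \<rho> * dagger (Us t))"

definition ketbra :: "nat \<Rightarrow> nat \<Rightarrow> complex mat" where
  "ketbra n x = mat (2 ^ n) (2 ^ n) (\<lambda>(r, c). if r = x \<and> c = x then 1 else 0)"

definition mtrace :: "complex mat \<Rightarrow> complex" where
  "mtrace A = (\<Sum>i<dim_row A. A $$ (i, i))"

definition out_prob :: "real \<Rightarrow> nat \<Rightarrow> (nat \<Rightarrow> complex mat) \<Rightarrow> nat \<Rightarrow> complex mat \<Rightarrow> nat \<Rightarrow> nat \<Rightarrow> real" where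
  "out_prob g n Us d U y x =
     Re (mtrace (dagger U * ketbra n x * U * noisy_circuit g n Us d (ketbra n y)))"

end

theory Submission
  imports Defs "HOL-Analysis.Convex"
begin

text \<open>In the Pauli basis, |y><y| is a sum of the 2^n strings built from I and Z, each with
  coefficient of modulus 2^{-n}. A Clifford layer sends each Pauli string to a phase times
  another one, injectively on labels, and a depolarizing layer scales the string with label s
  by (1 - g)^{|s|}, |s| being the number of non-identity factors. Hence the output state is a
  combination of 2^n distinct Pauli strings whose z-th coefficient has modulus
  2^{-n} \<Prod>_{t \<le> d} (1 - g)^{|s_t(z)|}, where s_t(z) is the label after t layers.
  The squared outcome probabilities sum to at most the squared Frobenius norm of the state,
  which by orthogonality of Pauli strings is 2^{-n} \<Sum>_z \<Prod>_t (1 - g)^{2|s_t(z)|}.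
  AM-GM over the d + 1 layers and injectivity of each z \<mapsto> s_t(z) bound this by
  2^{-n} \<Sum>_s (1 - g)^{2(d+1)|s|} = 2^{-n} (1 + 3(1 - g)^{2(d+1)})^n, which is at most
  e^3 / 2^n as soon as d \<ge> ln n / g. The bound holds for every input y, so also on average.\<close>

section \<open>Bits of basis indices\<close>

lemma qbit_less_2: "qbit k r < 2"
  by (simp add: qbit_def)

lemma qbit_add_mult_pow2:
  fixes m l :: nat
  assumes "l < 2 ^ k"
  shows "qbit j (m * 2 ^ k + l) = (if j < k then qbit j l else qbit (j - k) m)"
proof (cases "j < k")
  case True
  have "(2::nat) ^ k = 2 ^ j * 2 ^ (k - j)"
    using True by (simp flip: power_add)
  then have "(m * 2 ^ k + l) div 2 ^ j = (l + m * 2 ^ (k - j) * 2 ^ j) div 2 ^ j"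
    by (simp add: algebra_simps)
  also have "\<dots> = m * 2 ^ (k - j) + l div 2 ^ j"
    by simp
  finally have "(m * 2 ^ k + l) div 2 ^ j = m * 2 ^ (k - j) + l div 2 ^ j" .
  moreover have "even (m * 2 ^ (k - j))"
    using True by simp
  then obtain q where "m * 2 ^ (k - j) = 2 * q"
    by blast
  ultimately show ?thesis
    using True by (simp add: qbit_def)
next
  case False
  have "(2::nat) ^ j = 2 ^ k * 2 ^ (j - k)"
    using False by (simp flip: power_add)
  then have "(m * 2 ^ k + l) div 2 ^ j = ((m * 2 ^ k + l) div 2 ^ k) div 2 ^ (j - k)"
    by (simp add: div_mult2_eq)
  also have "(m * 2 ^ k + l) div 2 ^ k = m"
    using assms by simp
  finally show ?thesis
    using False by (simp add: qbit_def)
qed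

lemma qbit_mod_pow2: "k < n \<Longrightarrow> qbit k (r mod 2 ^ n) = qbit k r"
  using qbit_add_mult_pow2[of "r mod 2 ^ n" n k "r div 2 ^ n"] by (simp add: div_mult_mod_eq)

lemma eq_if_qbit_eq:
  assumes "r < 2 ^ n" "r' < 2 ^ n" "\<forall>k<n. qbit k r = qbit k r'"
  shows "r = r'"
  using assms
proof (induction n arbitrary: r r')
  case (Suc n)
  have "r mod 2 ^ n = r' mod 2 ^ n"
    by (rule Suc.IH) (use Suc.prems(3) qbit_mod_pow2 in auto)
  moreover have "r div 2 ^ n < 2" "r' div 2 ^ n < 2"
    using Suc.prems(1,2) by (simp_all add: less_mult_imp_div_less)
  then have "r div 2 ^ n = qbit n r" "r' div 2 ^ n = qbit n r'"
    by (simp_all add: qbit_def)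
  ultimately show ?case
    using Suc.prems(3) by (metis div_mult_mod_eq lessI)
qed simp

lemma qbit_decomp: "r = (r div 2 ^ Suc k * 2 + qbit k r) * 2 ^ k + r mod 2 ^ k"
proof -
  have "r div 2 ^ Suc k = r div 2 ^ k div 2"
    by (metis div_mult2_eq power_Suc2)
  then have "r div 2 ^ k = r div 2 ^ Suc k * 2 + qbit k r"
    unfolding qbit_def using div_mult_mod_eq[of "r div 2 ^ k" 2] by simp
  then show ?thesis
    by (metis div_mult_mod_eq)
qed

lemma set_qbit_eq: "set_qbit k r b = (r div 2 ^ Suc k * 2 + b) * 2 ^ k + r mod 2 ^ k"
proof -
  define high where "high = r div 2 ^ Suc k * 2 * 2 ^ k"
  define bit where "bit = qbit k r * 2 ^ k"
  have "r = high + bit + r mod 2 ^ k"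
    unfolding high_def bit_def using qbit_decomp[of r k] by (simp add: distrib_right)
  then have "set_qbit k r b = high + b * 2 ^ k + r mod 2 ^ k"
    unfolding set_qbit_def bit_def[symmetric] by linarith
  then show ?thesis
    unfolding high_def by (simp add: distrib_right)
qed

lemma qbit_set_qbit:
  assumes "b < 2"
  shows "qbit j (set_qbit k r b) = (if j = k then b else qbit j r)"
proof -
  have low: "r mod 2 ^ k < 2 ^ k"
    by simp
  have last_bit: "qbit i (q * 2 + c) = (if i = 0 then c else qbit (i - 1) q)" if "c < 2" for i q c :: nat
    using qbit_add_mult_pow2[of c 1 i q] that by (cases i) (auto simp: qbit_def)
  have "qbit j (set_qbit k r b)
      = (if j < k then qbit j (r mod 2 ^ k) else qbit (j - k) (r div 2 ^ Suc k * 2 + b))"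
    unfolding set_qbit_eq using qbit_add_mult_pow2[OF low] by simp
  moreover have "qbit j r
      = (if j < k then qbit j (r mod 2 ^ k) else qbit (j - k) (r div 2 ^ Suc k * 2 + qbit k r))"
    using qbit_add_mult_pow2[OF low, of j "r div 2 ^ Suc k * 2 + qbit k r"] qbit_decomp[of r k] by simp
  ultimately show ?thesis
    using last_bit[OF assms] last_bit[OF qbit_less_2] by auto
qed

lemma set_qbit_less:
  assumes "k < n" "r < 2 ^ n" "b < 2"
  shows "set_qbit k r b < 2 ^ n"
proof -
  have "Suc k + (n - Suc k) = n"
    using assms(1) by simp
  then have "(2::nat) ^ n = 2 ^ Suc k * 2 ^ (n - Suc k)"
    by (metis power_add)
  then have "r div 2 ^ Suc k < 2 ^ (n - Suc k)"
    using assms(2) by (simp add: div_less_iff_less_mult mult.commute)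
  moreover have "2 ^ (n - k) = 2 * (2::nat) ^ (n - Suc k)"
    using assms(1) by (metis Suc_diff_Suc power_Suc)
  ultimately have "r div 2 ^ Suc k * 2 + b \<le> 2 ^ (n - k) - 1"
    using assms(3) by linarith
  then have "(r div 2 ^ Suc k * 2 + b) * 2 ^ k \<le> (2 ^ (n - k) - 1) * 2 ^ k"
    by simp
  moreover have "r mod 2 ^ k < 2 ^ k"
    by simp
  moreover have "(2 ^ (n - k) - 1) * 2 ^ k + 2 ^ k = (2::nat) ^ n"
    using assms(1) by (simp add: algebra_simps flip: power_add)
  ultimately show ?thesis
    unfolding set_qbit_eq by linarith
qed

lemma sum_pow2_Suc:
  fixes F :: "nat \<Rightarrow> 'a::comm_monoid_add"
  shows "(\<Sum>r<2 ^ Suc n. F r) = (\<Sum>r<2 ^ n. F r) + (\<Sum>r<2 ^ n. F (r + 2 ^ n))"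
proof -
  have double: "(2::nat) ^ Suc n = 2 ^ n + 2 ^ n"
    by simp
  have "(\<Sum>r<2 ^ Suc n. F r) = (\<Sum>r\<in>{0..<2 ^ n}. F r) + (\<Sum>r\<in>{2 ^ n..<2 ^ n + 2 ^ n}. F r)"
    unfolding double atLeast0LessThan[symmetric] by (rule sum.atLeastLessThan_concat[symmetric]) auto
  also have "(\<Sum>r\<in>{2 ^ n..<2 ^ n + 2 ^ n}. F r) = (\<Sum>r\<in>{0..<2 ^ n}. F (r + 2 ^ n))"
    using sum.shift_bounds_nat_ivl[of F 0 "2 ^ n" "2 ^ n"] by simp
  finally show ?thesis
    by (simp add: atLeast0LessThan)
qed

lemma sum_prod_qbit:
  fixes f :: "nat \<Rightarrow> nat \<Rightarrow> 'a::comm_semiring_1"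
  shows "(\<Sum>r<2 ^ n. \<Prod>k<n. f k (qbit k r)) = (\<Prod>k<n. f k 0 + f k 1)"
proof (induction n)
  case (Suc n)
  have q0: "qbit n r = 0" if "r < 2 ^ n" for r :: nat
    using that by (simp add: qbit_def)
  have q1: "qbit k (r + 2 ^ n) = qbit k r" if "r < 2 ^ n" "k < n" for k r :: nat
    using qbit_add_mult_pow2[OF that(1), of k 1] that by (simp add: add.commute)
  have q2: "qbit n (r + 2 ^ n) = 1" if "r < 2 ^ n" for r :: nat
    using qbit_add_mult_pow2[OF that(1), of n 1] by (simp add: add.commute qbit_def)
  have low: "(\<Prod>k<Suc n. f k (qbit k r)) = (\<Prod>k<n. f k (qbit k r)) * f n 0" if "r < 2 ^ n" for r
    using that by (simp add: q0)
  have high: "(\<Prod>k<Suc n. f k (qbit k (r + 2 ^ n))) = (\<Prod>k<n. f k (qbit k r)) * f n 1"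
    if "r < 2 ^ n" for r
  proof -
    have "(\<Prod>k<n. f k (qbit k (r + 2 ^ n))) = (\<Prod>k<n. f k (qbit k r))"
      using that by (intro prod.cong refl) (simp add: q1)
    then show ?thesis
      using that q2 by simp
  qed
  have "(\<Sum>r<2 ^ Suc n. \<Prod>k<Suc n. f k (qbit k r))
      = (\<Sum>r<2 ^ n. (\<Prod>k<n. f k (qbit k r)) * f n 0) + (\<Sum>r<2 ^ n. (\<Prod>k<n. f k (qbit k r)) * f n 1)"
    unfolding sum_pow2_Suc
    by (intro arg_cong2[where f = "(+)"] sum.cong refl) (simp_all only: lessThan_iff low high)
  then show ?case
    using Suc.IH by (simp add: distrib_left flip: sum_distrib_right)
qed simp

section \<open>Pauli strings\<close>

definition pauli_entry :: "nat \<Rightarrow> (nat \<Rightarrow> nat) \<Rightarrow> nat \<Rightarrow> nat \<Rightarrow> complex" where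
  "pauli_entry n s r c = (\<Prod>k<n. pauli1 (s k) (qbit k r) (qbit k c))"

definition pauli_labels :: "nat \<Rightarrow> (nat \<Rightarrow> nat) set" where
  "pauli_labels n = PiE {..<n} (\<lambda>_. {..<4})"

lemma finite_pauli_labels: "finite (pauli_labels n)"
  by (simp add: pauli_labels_def finite_PiE)

lemma pauli_labels_less_4: "s \<in> pauli_labels n \<Longrightarrow> k < n \<Longrightarrow> s k < 4"
  unfolding pauli_labels_def using PiE_mem[of s "{..<n}" "\<lambda>_. {..<4::nat}" k] by simp

lemma pauli_string_eq: "pauli_string n s = mat (2 ^ n) (2 ^ n) (\<lambda>(r, c). pauli_entry n s r c)"
  by (simp add: pauli_string_def pauli_entry_def)

lemma pauli_string_carrier: "pauli_string n s \<in> carrier_mat (2 ^ n) (2 ^ n)"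
  by (simp add: pauli_string_def)

lemma pauli_string_dims [simp]:
  "dim_row (pauli_string n s) = 2 ^ n" "dim_col (pauli_string n s) = 2 ^ n"
  by (simp_all add: pauli_string_def)

lemma pauli_string_index:
  "r < 2 ^ n \<Longrightarrow> c < 2 ^ n \<Longrightarrow> pauli_string n s $$ (r, c) = pauli_entry n s r c"
  by (simp add: pauli_string_eq)

lemma pauli_string_restrict: "pauli_string n (restrict s {..<n}) = pauli_string n s"
proof -
  have "pauli_entry n (restrict s {..<n}) = pauli_entry n s"
    by (intro ext) (simp add: pauli_entry_def)
  then show ?thesis
    by (simp only: pauli_string_eq)
qed

lemma pauli1_orthogonal:
  assumes "p < 4" "q < 4"
  shows "(\<Sum>a\<in>{0, 1::nat}. \<Sum>b\<in>{0, 1::nat}. cnj (pauli1 p a b) * pauli1 q a b) = (if p = q then 2 else 0)"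
  using assms by (auto simp: pauli1_def less_Suc_eq numeral_eq_Suc)

lemma pauli_entry_orthogonal:
  assumes "s \<in> pauli_labels n" "t \<in> pauli_labels n"
  shows "(\<Sum>r<2 ^ n. \<Sum>c<2 ^ n. cnj (pauli_entry n s r c) * pauli_entry n t r c) = (if s = t then 2 ^ n else 0)"
proof -
  define h where "h k a b = cnj (pauli1 (s k) a b) * pauli1 (t k) a b" for k a b
  have "(\<Sum>r<2 ^ n. \<Sum>c<2 ^ n. cnj (pauli_entry n s r c) * pauli_entry n t r c)
      = (\<Sum>r<2 ^ n. \<Sum>c<2 ^ n. \<Prod>k<n. h k (qbit k r) (qbit k c))"
    by (simp add: pauli_entry_def h_def prod.distrib)
  also have "\<dots> = (\<Sum>r<2 ^ n. \<Prod>k<n. h k (qbit k r) 0 + h k (qbit k r) 1)"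
    by (intro sum.cong refl) (rule sum_prod_qbit)
  also have "\<dots> = (\<Prod>k<n. \<Sum>a\<in>{0, 1::nat}. \<Sum>b\<in>{0, 1::nat}. h k a b)"
    using sum_prod_qbit[where f = "\<lambda>k a. h k a 0 + h k a 1"] by simp
  also have "\<dots> = (\<Prod>k<n. if s k = t k then 2 else 0)"
    unfolding h_def using assms by (intro prod.cong refl pauli1_orthogonal) (auto simp: pauli_labels_less_4)
  also have "\<dots> = (if s = t then 2 ^ n else 0)"
  proof (cases "s = t")
    case False
    then obtain k where "k < n" "s k \<noteq> t k"
      using assms unfolding pauli_labels_def by (metis PiE_ext lessThan_iff)
    then have "(\<Prod>k<n. if s k = t k then 2 else 0) = (0::complex)"
      by (intro prod_zero) auto
    then show ?thesis
      using False by simp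
  qed simp
  finally show ?thesis .
qed

lemma pauli1_trace: "p < 4 \<Longrightarrow> pauli1 p 0 0 + pauli1 p 1 1 = (if p = 0 then 2 else 0)"
  by (auto simp: pauli1_def less_Suc_eq numeral_eq_Suc)

lemma pauli_entry_remove:
  assumes "k < n"
  shows "pauli_entry n s r c
    = pauli1 (s k) (qbit k r) (qbit k c) * (\<Prod>j\<in>{..<n} - {k}. pauli1 (s j) (qbit j r) (qbit j c))"
  unfolding pauli_entry_def using assms by (subst prod.remove[of _ k]) auto

lemma pauli_entry_set_qbit:
  assumes "k < n" "b < 2"
  shows "pauli_entry n s (set_qbit k r b) (set_qbit k c b)
    = pauli1 (s k) b b * (\<Prod>j\<in>{..<n} - {k}. pauli1 (s j) (qbit j r) (qbit j c))"
  unfolding pauli_entry_remove[OF assms(1)] using assms(2) by (simp add: qbit_set_qbit)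

text \<open>The depolarizing channel on qubit k fixes the identity and scales X, Y, Z by 1 - g,
  since the partial trace over qubit k kills every traceless Pauli factor there.\<close>

lemma depol_pauli_entry:
  assumes "k < n" "s k < 4"
  shows "complex_of_real (1 - g) * pauli_entry n s r c
      + (if qbit k r = qbit k c
         then complex_of_real (g / 2) * (\<Sum>b\<in>{0, 1::nat}. pauli_entry n s (set_qbit k r b) (set_qbit k c b))
         else 0)
    = complex_of_real (if s k = 0 then 1 else 1 - g) * pauli_entry n s r c"
proof -
  define R where "R = (\<Prod>j\<in>{..<n} - {k}. pauli1 (s j) (qbit j r) (qbit j c))"
  have partial_trace: "(\<Sum>b\<in>{0, 1::nat}. pauli_entry n s (set_qbit k r b) (set_qbit k c b))
      = (if s k = 0 then 2 else 0) * R"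
    using pauli_entry_set_qbit[OF assms(1), of 0 s r c] pauli_entry_set_qbit[OF assms(1), of 1 s r c]
      pauli1_trace[OF assms(2)]
    unfolding R_def by (simp add: distrib_right[symmetric])
  have entry: "pauli_entry n s r c = pauli1 (s k) (qbit k r) (qbit k c) * R"
    unfolding R_def by (rule pauli_entry_remove[OF assms(1)])
  show ?thesis
  proof (cases "s k = 0")
    case True
    then have "pauli_entry n s r c = (if qbit k r = qbit k c then R else 0)"
      using entry by (simp add: pauli1_def)
    then show ?thesis
      using partial_trace True by (simp add: algebra_simps)
  qed (use partial_trace entry in auto)
qed

section \<open>Adjoint, trace and the Hilbert--Schmidt inner product\<close>

lemma dagger_carrier: "A \<in> carrier_mat m k \<Longrightarrow> dagger A \<in> carrier_mat k m"
  by (simp add: dagger_def)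

lemma dagger_index: "i < dim_col A \<Longrightarrow> j < dim_row A \<Longrightarrow> dagger A $$ (i, j) = cnj (A $$ (j, i))"
  by (simp add: dagger_def)

lemma dagger_dims [simp]: "dim_row (dagger A) = dim_col A" "dim_col (dagger A) = dim_row A"
  by (simp_all add: dagger_def)

lemma dagger_mult:
  assumes "A \<in> carrier_mat m k" "B \<in> carrier_mat k l"
  shows "dagger (A * B) = dagger B * dagger A"
  using assms by (intro eq_matI) (auto simp: dagger_index scalar_prod_def mult.commute)

lemma dagger_dagger [simp]: "dagger (dagger A) = A"
  by (intro eq_matI) (auto simp: dagger_index)

lemma mtrace_mult_comm:
  assumes "A \<in> carrier_mat m k" "B \<in> carrier_mat k m"
  shows "mtrace (A * B) = mtrace (B * A)"
  using assms unfolding mtrace_def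
  by (simp add: scalar_prod_def atLeast0LessThan) (subst sum.swap, simp add: mult.commute)

lemma conj_mat_index:
  assumes "V \<in> carrier_mat N N" "X \<in> carrier_mat N N" "r < N" "c < N"
  shows "(V * X * dagger V) $$ (r, c) = (\<Sum>i<N. \<Sum>j<N. V $$ (r, i) * X $$ (i, j) * cnj (V $$ (c, j)))"
  using assms
  by (simp add: scalar_prod_def atLeast0LessThan dagger_index sum_distrib_right) (subst sum.swap, simp)

definition hs_inner :: "nat \<Rightarrow> complex mat \<Rightarrow> complex mat \<Rightarrow> complex" where
  "hs_inner N A B = (\<Sum>r<N. \<Sum>c<N. cnj (A $$ (r, c)) * B $$ (r, c))"

lemma hs_inner_eq_mtrace:
  assumes "A \<in> carrier_mat N N" "B \<in> carrier_mat N N"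
  shows "hs_inner N A B = mtrace (dagger A * B)"
  using assms unfolding mtrace_def hs_inner_def
  by (simp add: scalar_prod_def atLeast0LessThan dagger_index) (subst sum.swap, simp)

lemma hs_inner_self: "hs_inner N A A = of_real (\<Sum>r<N. \<Sum>c<N. (cmod (A $$ (r, c)))\<^sup>2)"
  unfolding hs_inner_def of_real_sum by (intro sum.cong refl) (metis complex_norm_square mult.commute)

lemma hs_inner_smult:
  assumes "A \<in> carrier_mat N N" "B \<in> carrier_mat N N"
  shows "hs_inner N (a \<cdot>\<^sub>m A) (b \<cdot>\<^sub>m B) = cnj a * b * hs_inner N A B"
  using assms unfolding hs_inner_def by (simp add: sum_distrib_left mult_ac)

lemma hs_inner_unitary_conj:
  assumes V: "unitary_op N V" and A: "A \<in> carrier_mat N N" and B: "B \<in> carrier_mat N N"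
  shows "hs_inner N (V * A * dagger V) (V * B * dagger V) = hs_inner N A B"
proof -
  have Vc: "V \<in> carrier_mat N N" and VV: "dagger V * V = 1\<^sub>m N"
    using V unfolding unitary_op_def by auto
  have Vd: "dagger V \<in> carrier_mat N N" and Ad: "dagger A \<in> carrier_mat N N"
    using dagger_carrier Vc A by auto
  have "dagger (V * A * dagger V) = dagger (V * (A * dagger V))"
    using Vc A Vd by simp
  also have "\<dots> = V * dagger A * dagger V"
    using A Vc Vd Ad by (simp add: dagger_mult[of _ N N _ N] assoc_mult_mat[of _ N N _ N _ N])
  finally have "hs_inner N (V * A * dagger V) (V * B * dagger V)
      = mtrace (V * dagger A * dagger V * (V * B * dagger V))"
    using Vc Vd A B by (simp add: hs_inner_eq_mtrace)
  also have "V * dagger A * dagger V * (V * B * dagger V) = V * (dagger A * ((dagger V * V) * (B * dagger V)))"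
    using Vc Vd Ad B by (simp add: assoc_mult_mat[of _ N N _ N _ N])
  also have "\<dots> = V * (dagger A * B * dagger V)"
    using Vc Vd Ad B VV by (simp add: assoc_mult_mat[of _ N N _ N _ N])
  also have "mtrace \<dots> = mtrace (dagger A * B * dagger V * V)"
    using Vc Vd Ad B by (intro mtrace_mult_comm[of _ N N]) auto
  also have "dagger A * B * dagger V * V = dagger A * B"
    using Ad B Vd Vc VV by (simp add: assoc_mult_mat[of _ N N _ N _ N])
  finally show ?thesis
    using A B by (simp add: hs_inner_eq_mtrace)
qed

lemma hs_inner_pauli_string:
  assumes "s \<in> pauli_labels n" "t \<in> pauli_labels n"
  shows "hs_inner (2 ^ n) (pauli_string n s) (pauli_string n t) = (if s = t then 2 ^ n else 0)"
  unfolding hs_inner_def using pauli_entry_orthogonal[OF assms] by (simp add: pauli_string_index)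

section \<open>Pauli expansions\<close>

definition pauli_expansion :: "nat \<Rightarrow> 'z set \<Rightarrow> ('z \<Rightarrow> complex) \<Rightarrow> ('z \<Rightarrow> nat \<Rightarrow> nat) \<Rightarrow> complex mat" where
  "pauli_expansion n Z \<alpha> \<sigma> = mat (2 ^ n) (2 ^ n) (\<lambda>(r, c). \<Sum>z\<in>Z. \<alpha> z * pauli_entry n (\<sigma> z) r c)"

lemma pauli_expansion_carrier: "pauli_expansion n Z \<alpha> \<sigma> \<in> carrier_mat (2 ^ n) (2 ^ n)"
  by (simp add: pauli_expansion_def)

lemma pauli_expansion_index:
  "r < 2 ^ n \<Longrightarrow> c < 2 ^ n \<Longrightarrow> pauli_expansion n Z \<alpha> \<sigma> $$ (r, c) = (\<Sum>z\<in>Z. \<alpha> z * pauli_entry n (\<sigma> z) r c)"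
  by (simp add: pauli_expansion_def)

lemma hs_inner_pauli_expansion:
  assumes "finite Z" "inj_on \<sigma> Z" "\<And>z. z \<in> Z \<Longrightarrow> \<sigma> z \<in> pauli_labels n"
  shows "hs_inner (2 ^ n) (pauli_expansion n Z \<alpha> \<sigma>) (pauli_expansion n Z \<alpha> \<sigma>) = 2 ^ n * (\<Sum>z\<in>Z. cnj (\<alpha> z) * \<alpha> z)"
proof -
  define E where "E z w = (\<Sum>r<2 ^ n. \<Sum>c<2 ^ n. cnj (pauli_entry n (\<sigma> z) r c) * pauli_entry n (\<sigma> w) r c)" for z w
  have "hs_inner (2 ^ n) (pauli_expansion n Z \<alpha> \<sigma>) (pauli_expansion n Z \<alpha> \<sigma>)
      = (\<Sum>r<2 ^ n. \<Sum>c<2 ^ n. \<Sum>z\<in>Z. \<Sum>w\<in>Z.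
           cnj (\<alpha> z) * \<alpha> w * (cnj (pauli_entry n (\<sigma> z) r c) * pauli_entry n (\<sigma> w) r c))"
    unfolding hs_inner_def
    by (intro sum.cong refl) (simp only: lessThan_iff pauli_expansion_index cnj_sum sum_product, simp add: mult_ac)
  also have "\<dots> = (\<Sum>z\<in>Z. \<Sum>w\<in>Z. cnj (\<alpha> z) * \<alpha> w * E z w)"
    unfolding E_def sum_distrib_left
    by (subst sum.swap, subst (2) sum.swap, rule sum.cong[OF refl],
        subst sum.swap, subst (2) sum.swap, rule refl)
  also have "\<dots> = (\<Sum>z\<in>Z. \<Sum>w\<in>Z. if w = z then cnj (\<alpha> z) * \<alpha> z * 2 ^ n else 0)"
  proof (intro sum.cong refl)
    fix z w assume "z \<in> Z" "w \<in> Z"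
    then have "(\<sigma> z = \<sigma> w) = (w = z)"
      using assms(2) by (auto dest: inj_onD)
    then show "cnj (\<alpha> z) * \<alpha> w * E z w = (if w = z then cnj (\<alpha> z) * \<alpha> z * 2 ^ n else 0)"
      unfolding E_def using pauli_entry_orthogonal assms(3) \<open>z \<in> Z\<close> \<open>w \<in> Z\<close> by auto
  qed
  finally show ?thesis
    using assms(1) by (simp add: sum_distrib_left mult_ac)
qed

lemma conj_pauli_expansion:
  assumes V: "V \<in> carrier_mat (2 ^ n) (2 ^ n)"
    and conj: "\<And>z. z \<in> Z \<Longrightarrow> V * pauli_string n (\<sigma> z) * dagger V = \<phi> z \<cdot>\<^sub>m pauli_string n (\<tau> z)"
  shows "V * pauli_expansion n Z \<alpha> \<sigma> * dagger V = pauli_expansion n Z (\<lambda>z. \<alpha> z * \<phi> z) \<tau>"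
proof (rule eq_matI)
  fix r c
  assume "r < dim_row (pauli_expansion n Z (\<lambda>z. \<alpha> z * \<phi> z) \<tau>)"
    "c < dim_col (pauli_expansion n Z (\<lambda>z. \<alpha> z * \<phi> z) \<tau>)"
  then have r: "r < 2 ^ n" and c: "c < 2 ^ n"
    by (auto simp: pauli_expansion_def)
  define W where "W z = (\<Sum>i<2 ^ n. \<Sum>j<2 ^ n. V $$ (r, i) * pauli_entry n (\<sigma> z) i j * cnj (V $$ (c, j)))" for z
  have "(V * pauli_expansion n Z \<alpha> \<sigma> * dagger V) $$ (r, c)
      = (\<Sum>i<2 ^ n. \<Sum>j<2 ^ n. \<Sum>z\<in>Z. \<alpha> z * (V $$ (r, i) * pauli_entry n (\<sigma> z) i j * cnj (V $$ (c, j))))"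
    using conj_mat_index[OF V pauli_expansion_carrier r c]
    by (simp add: pauli_expansion_index sum_distrib_left sum_distrib_right mult_ac)
  also have "\<dots> = (\<Sum>z\<in>Z. \<alpha> z * W z)"
    unfolding W_def sum_distrib_left
    by (subst sum.swap, rule sum.cong[OF refl], subst sum.swap, rule refl)
  also have "\<dots> = (\<Sum>z\<in>Z. \<alpha> z * \<phi> z * pauli_entry n (\<tau> z) r c)"
  proof (intro sum.cong refl)
    fix z assume "z \<in> Z"
    have "W z = (V * pauli_string n (\<sigma> z) * dagger V) $$ (r, c)"
      unfolding W_def using conj_mat_index[OF V pauli_string_carrier r c] r c by (simp add: pauli_string_index)
    then show "\<alpha> z * W z = \<alpha> z * \<phi> z * pauli_entry n (\<tau> z) r c"
      using conj[OF \<open>z \<in> Z\<close>] r c by (simp add: pauli_string_index)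
  qed
  finally show "(V * pauli_expansion n Z \<alpha> \<sigma> * dagger V) $$ (r, c) = pauli_expansion n Z (\<lambda>z. \<alpha> z * \<phi> z) \<tau> $$ (r, c)"
    using r c by (simp add: pauli_expansion_index)
qed (use V in \<open>auto simp: pauli_expansion_def\<close>)

lemma depol_qubit_pauli_expansion:
  assumes "k < n" "\<And>z. z \<in> Z \<Longrightarrow> \<sigma> z k < 4"
  shows "depol_qubit g n k (pauli_expansion n Z \<alpha> \<sigma>)
    = pauli_expansion n Z (\<lambda>z. \<alpha> z * complex_of_real (if \<sigma> z k = 0 then 1 else 1 - g)) \<sigma>"
proof (rule eq_matI)
  fix r c
  assume "r < dim_row (pauli_expansion n Z (\<lambda>z. \<alpha> z * complex_of_real (if \<sigma> z k = 0 then 1 else 1 - g)) \<sigma>)"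
    "c < dim_col (pauli_expansion n Z (\<lambda>z. \<alpha> z * complex_of_real (if \<sigma> z k = 0 then 1 else 1 - g)) \<sigma>)"
  then have r: "r < 2 ^ n" and c: "c < 2 ^ n"
    by (auto simp: pauli_expansion_def)
  have "set_qbit k r b < 2 ^ n" "set_qbit k c b < 2 ^ n" if "b < 2" for b
    using set_qbit_less[OF assms(1) r that] set_qbit_less[OF assms(1) c that] by auto
  then have "depol_qubit g n k (pauli_expansion n Z \<alpha> \<sigma>) $$ (r, c)
      = (\<Sum>z\<in>Z. \<alpha> z * (complex_of_real (1 - g) * pauli_entry n (\<sigma> z) r c
          + (if qbit k r = qbit k c
             then complex_of_real (g / 2) * (\<Sum>b\<in>{0, 1::nat}. pauli_entry n (\<sigma> z) (set_qbit k r b) (set_qbit k c b))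
             else 0)))"
    unfolding depol_qubit_def using r c
    by (simp add: pauli_expansion_index sum.distrib sum_distrib_left distrib_left mult_ac)
  also have "\<dots> = (\<Sum>z\<in>Z. \<alpha> z * complex_of_real (if \<sigma> z k = 0 then 1 else 1 - g) * pauli_entry n (\<sigma> z) r c)"
  proof (intro sum.cong refl)
    fix z assume "z \<in> Z"
    then show "\<alpha> z * (complex_of_real (1 - g) * pauli_entry n (\<sigma> z) r c
          + (if qbit k r = qbit k c
             then complex_of_real (g / 2) * (\<Sum>b\<in>{0, 1::nat}. pauli_entry n (\<sigma> z) (set_qbit k r b) (set_qbit k c b))
             else 0))
        = \<alpha> z * complex_of_real (if \<sigma> z k = 0 then 1 else 1 - g) * pauli_entry n (\<sigma> z) r c"
      using depol_pauli_entry[OF assms(1), of "\<sigma> z" g r c] assms(2) by simp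
  qed
  finally show "depol_qubit g n k (pauli_expansion n Z \<alpha> \<sigma>) $$ (r, c)
      = pauli_expansion n Z (\<lambda>z. \<alpha> z * complex_of_real (if \<sigma> z k = 0 then 1 else 1 - g)) \<sigma> $$ (r, c)"
    using r c by (simp add: pauli_expansion_index)
qed (auto simp: depol_qubit_def pauli_expansion_def)

definition depol_factor :: "real \<Rightarrow> nat \<Rightarrow> (nat \<Rightarrow> nat) \<Rightarrow> real" where
  "depol_factor g m s = (\<Prod>k<m. if s k = 0 then 1 else 1 - g)"

lemma depol_factor_nonneg: "g \<le> 1 \<Longrightarrow> 0 \<le> depol_factor g m s"
  unfolding depol_factor_def by (intro prod_nonneg) auto

lemma depol_all_pauli_expansion:
  assumes "m \<le> n" "\<And>z. z \<in> Z \<Longrightarrow> \<sigma> z \<in> pauli_labels n"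
  shows "depol_all g n m (pauli_expansion n Z \<alpha> \<sigma>)
    = pauli_expansion n Z (\<lambda>z. \<alpha> z * complex_of_real (depol_factor g m (\<sigma> z))) \<sigma>"
  using assms(1)
proof (induction m)
  case (Suc m)
  then have "m < n"
    by simp
  have "depol_all g n (Suc m) (pauli_expansion n Z \<alpha> \<sigma>)
      = depol_qubit g n m (pauli_expansion n Z (\<lambda>z. \<alpha> z * complex_of_real (depol_factor g m (\<sigma> z))) \<sigma>)"
    using Suc by simp
  also have "\<dots> = pauli_expansion n Z
      (\<lambda>z. \<alpha> z * complex_of_real (depol_factor g m (\<sigma> z)) * complex_of_real (if \<sigma> z m = 0 then 1 else 1 - g)) \<sigma>"
    using \<open>m < n\<close> assms(2) pauli_labels_less_4 by (intro depol_qubit_pauli_expansion) auto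
  finally show ?case
    by (simp add: depol_factor_def mult.assoc)
qed (simp add: depol_factor_def)

text \<open>Expanding the tensor product of the factors (I + (-1)^{y_k} Z)/2 shows
  that |y><y| is the sum over z of (-1)^{|y \<and> z|} / 2^n times the Pauli string with Z exactly at the bits of z.\<close>

definition z_label :: "nat \<Rightarrow> nat \<Rightarrow> nat \<Rightarrow> nat" where
  "z_label n z = restrict (\<lambda>k. 3 * qbit k z) {..<n}"

definition ketbra_coeff :: "nat \<Rightarrow> nat \<Rightarrow> nat \<Rightarrow> complex" where
  "ketbra_coeff n y z = (\<Prod>k<n. if qbit k y = 1 \<and> qbit k z = 1 then -1 else 1) / 2 ^ n"

lemma z_label_in_pauli_labels: "z_label n z \<in> pauli_labels n"
proof -
  have "3 * qbit k z < 4" for k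
    using qbit_less_2[of k z] by (auto simp: less_Suc_eq)
  then show ?thesis
    unfolding z_label_def pauli_labels_def restrict_PiE_iff by auto
qed

lemma inj_on_z_label: "inj_on (z_label n) {..<2 ^ n}"
proof (rule inj_onI)
  fix z w assume "z \<in> {..<2 ^ n}" "w \<in> {..<2 ^ n}" "z_label n z = z_label n w"
  moreover have "qbit k z = qbit k w" if "k < n" "z_label n z = z_label n w" for k
  proof -
    have "z_label n z k = z_label n w k"
      using that(2) by simp
    then show ?thesis
      using that(1) by (simp add: z_label_def)
  qed
  ultimately show "z = w"
    by (auto intro: eq_if_qbit_eq)
qed

lemma norm_ketbra_coeff: "cmod (ketbra_coeff n y z) = 1 / 2 ^ n"
proof -
  have "cmod (\<Prod>k<n. (if qbit k y = 1 \<and> qbit k z = 1 then -1 else 1 :: complex)) = 1"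
    unfolding prod_norm[symmetric] by (intro prod.neutral) auto
  then show ?thesis
    unfolding ketbra_coeff_def by (simp add: norm_divide norm_power)
qed

lemma ketbra_pauli_expansion:
  assumes y: "y < 2 ^ n"
  shows "ketbra n y = pauli_expansion n {..<2 ^ n} (ketbra_coeff n y) (z_label n)"
proof (rule eq_matI)
  fix r c
  assume "r < dim_row (pauli_expansion n {..<2 ^ n} (ketbra_coeff n y) (z_label n))"
    "c < dim_col (pauli_expansion n {..<2 ^ n} (ketbra_coeff n y) (z_label n))"
  then have r: "r < 2 ^ n" and c: "c < 2 ^ n"
    by (auto simp: pauli_expansion_def)
  define h where "h k b = (if qbit k y = 1 \<and> b = 1 then -1 else 1) * pauli1 (3 * b) (qbit k r) (qbit k c) / 2"
    for k b
  have factor: "h k 0 + h k 1 = (if qbit k r = qbit k y \<and> qbit k c = qbit k y then 1 else 0)" for k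
    using qbit_less_2[of k r] qbit_less_2[of k c] qbit_less_2[of k y]
    by (auto simp: h_def pauli1_def less_Suc_eq)
  have "pauli_expansion n {..<2 ^ n} (ketbra_coeff n y) (z_label n) $$ (r, c) = (\<Sum>z<2 ^ n. \<Prod>k<n. h k (qbit k z))"
    using r c
    by (simp add: pauli_expansion_index ketbra_coeff_def pauli_entry_def z_label_def h_def
        prod_dividef prod.distrib)
  also have "\<dots> = (\<Prod>k<n. if qbit k r = qbit k y \<and> qbit k c = qbit k y then 1 else 0)"
    unfolding sum_prod_qbit factor ..
  also have "\<dots> = (if r = y \<and> c = y then 1 else 0)"
    using eq_if_qbit_eq[OF r y] eq_if_qbit_eq[OF c y] by (auto intro: prod_zero)
  finally show "ketbra n y $$ (r, c) = pauli_expansion n {..<2 ^ n} (ketbra_coeff n y) (z_label n) $$ (r, c)"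
    using r c by (simp add: ketbra_def)
qed (auto simp: ketbra_def pauli_expansion_def)

section \<open>Clifford unitaries permute Pauli labels\<close>

lemma one_smult_mat: "(1::complex) \<cdot>\<^sub>m A = A"
  by (intro eq_matI) auto

definition clifford_image :: "nat \<Rightarrow> complex mat \<Rightarrow> (nat \<Rightarrow> nat) \<Rightarrow> complex \<times> (nat \<Rightarrow> nat)" where
  "clifford_image n V s = (SOME (\<phi>, t). \<phi> \<in> {1, -1, \<i>, -\<i>} \<and> t \<in> pauli_labels n \<and>
      V * pauli_string n s * dagger V = \<phi> \<cdot>\<^sub>m pauli_string n t)"

definition clifford_phase :: "nat \<Rightarrow> complex mat \<Rightarrow> (nat \<Rightarrow> nat) \<Rightarrow> complex" where
  "clifford_phase n V s = fst (clifford_image n V s)"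

definition clifford_label :: "nat \<Rightarrow> complex mat \<Rightarrow> (nat \<Rightarrow> nat) \<Rightarrow> nat \<Rightarrow> nat" where
  "clifford_label n V s = snd (clifford_image n V s)"

lemma clifford_conj_pauli_string:
  assumes V: "clifford n V" and s: "s \<in> pauli_labels n"
  shows "clifford_phase n V s \<in> {1, -1, \<i>, -\<i>}" "clifford_label n V s \<in> pauli_labels n"
    "V * pauli_string n s * dagger V = clifford_phase n V s \<cdot>\<^sub>m pauli_string n (clifford_label n V s)"
proof -
  have "pauli_string n s \<in> pauli_group n"
    unfolding pauli_group_def using pauli_labels_less_4[OF s] by (auto intro!: exI[of _ 1] simp: one_smult_mat)
  then have "V * pauli_string n s * dagger V \<in> pauli_group n"
    using V unfolding clifford_def by blast
  then obtain \<phi> t where "\<phi> \<in> {1, -1, \<i>, -\<i>}" "\<forall>k<n. t k < 4"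
      "V * pauli_string n s * dagger V = \<phi> \<cdot>\<^sub>m pauli_string n t"
    unfolding pauli_group_def by blast
  then have "\<exists>p. case p of (\<phi>, t) \<Rightarrow> \<phi> \<in> {1, -1, \<i>, -\<i>} \<and> t \<in> pauli_labels n \<and>
      V * pauli_string n s * dagger V = \<phi> \<cdot>\<^sub>m pauli_string n t"
    by (intro exI[of _ "(\<phi>, restrict t {..<n})"])
       (simp add: pauli_string_restrict pauli_labels_def restrict_PiE_iff)
  from someI_ex[OF this] show "clifford_phase n V s \<in> {1, -1, \<i>, -\<i>}" "clifford_label n V s \<in> pauli_labels n"
    "V * pauli_string n s * dagger V = clifford_phase n V s \<cdot>\<^sub>m pauli_string n (clifford_label n V s)"
    unfolding clifford_phase_def clifford_label_def clifford_image_def by (auto split: prod.splits)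
qed

lemma norm_clifford_phase: "clifford n V \<Longrightarrow> s \<in> pauli_labels n \<Longrightarrow> cmod (clifford_phase n V s) = 1"
  using clifford_conj_pauli_string(1) by fastforce

text \<open>Conjugation by a unitary preserves the orthogonality of distinct Pauli strings,
  so distinct labels cannot be sent to the same one.\<close>

lemma inj_on_clifford_label:
  assumes V: "clifford n V"
  shows "inj_on (clifford_label n V) (pauli_labels n)"
proof (rule inj_onI, rule ccontr)
  fix s t
  assume s: "s \<in> pauli_labels n" and t: "t \<in> pauli_labels n"
    and eq: "clifford_label n V s = clifford_label n V t" and "s \<noteq> t"
  have U: "unitary_op (2 ^ n) V"
    using V unfolding clifford_def by simp
  have "0 = hs_inner (2 ^ n) (pauli_string n s) (pauli_string n t)"
    using hs_inner_pauli_string[OF s t] \<open>s \<noteq> t\<close> by simp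
  also have "\<dots> = hs_inner (2 ^ n) (V * pauli_string n s * dagger V) (V * pauli_string n t * dagger V)"
    by (rule hs_inner_unitary_conj[OF U pauli_string_carrier pauli_string_carrier, symmetric])
  also have "\<dots> = cnj (clifford_phase n V s) * clifford_phase n V t
      * hs_inner (2 ^ n) (pauli_string n (clifford_label n V s)) (pauli_string n (clifford_label n V s))"
    unfolding clifford_conj_pauli_string(3)[OF V s] clifford_conj_pauli_string(3)[OF V t] eq
    by (rule hs_inner_smult[OF pauli_string_carrier pauli_string_carrier])
  also have "\<dots> = cnj (clifford_phase n V s) * clifford_phase n V t * 2 ^ n"
    using hs_inner_pauli_string clifford_conj_pauli_string(2)[OF V s] by simp
  finally show False
    using norm_clifford_phase[OF V s] norm_clifford_phase[OF V t] by auto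
qed

section \<open>The state of the noisy circuit\<close>

fun circuit_label :: "nat \<Rightarrow> (nat \<Rightarrow> complex mat) \<Rightarrow> nat \<Rightarrow> nat \<Rightarrow> nat \<Rightarrow> nat" where
  "circuit_label n Us 0 = z_label n"
| "circuit_label n Us (Suc t) = clifford_label n (Us t) \<circ> circuit_label n Us t"

fun circuit_phase :: "nat \<Rightarrow> (nat \<Rightarrow> complex mat) \<Rightarrow> nat \<Rightarrow> nat \<Rightarrow> complex" where
  "circuit_phase n Us 0 z = 1"
| "circuit_phase n Us (Suc t) z = circuit_phase n Us t z * clifford_phase n (Us t) (circuit_label n Us t z)"

definition circuit_damping :: "real \<Rightarrow> nat \<Rightarrow> (nat \<Rightarrow> complex mat) \<Rightarrow> nat \<Rightarrow> nat \<Rightarrow> real" where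
  "circuit_damping g n Us t z = (\<Prod>i\<le>t. depol_factor g n (circuit_label n Us i z))"

lemma circuit_damping_nonneg: "g \<le> 1 \<Longrightarrow> 0 \<le> circuit_damping g n Us t z"
  unfolding circuit_damping_def by (intro prod_nonneg) (simp add: depol_factor_nonneg)

lemma circuit_label_in_pauli_labels:
  "\<forall>i<t. clifford n (Us i) \<Longrightarrow> circuit_label n Us t z \<in> pauli_labels n"
  by (induction t) (simp_all add: z_label_in_pauli_labels clifford_conj_pauli_string(2))

lemma inj_on_circuit_label:
  "\<forall>i<t. clifford n (Us i) \<Longrightarrow> inj_on (circuit_label n Us t) {..<2 ^ n}"
proof (induction t)
  case (Suc t)
  have "circuit_label n Us t ` {..<2 ^ n} \<subseteq> pauli_labels n"
    using Suc.prems circuit_label_in_pauli_labels by auto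
  then have "inj_on (clifford_label n (Us t)) (circuit_label n Us t ` {..<2 ^ n})"
    using inj_on_clifford_label Suc.prems by (meson inj_on_subset lessI)
  then show ?case
    unfolding circuit_label.simps using Suc by (intro comp_inj_on) auto
qed (simp add: inj_on_z_label)

lemma norm_circuit_phase:
  "\<forall>i<t. clifford n (Us i) \<Longrightarrow> cmod (circuit_phase n Us t z) = 1"
  by (induction t) (simp_all add: norm_mult norm_clifford_phase circuit_label_in_pauli_labels)

lemma noisy_circuit_ketbra:
  assumes "\<forall>i<t. clifford n (Us i)" "y < 2 ^ n"
  shows "noisy_circuit g n Us t (ketbra n y) = pauli_expansion n {..<2 ^ n}
    (\<lambda>z. ketbra_coeff n y z * circuit_phase n Us t z * complex_of_real (circuit_damping g n Us t z))
    (circuit_label n Us t)"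
  using assms(1)
proof (induction t)
  case 0
  then show ?case
    using assms(2)
    by (simp add: ketbra_pauli_expansion depol_all_pauli_expansion z_label_in_pauli_labels circuit_damping_def)
next
  case (Suc t)
  have V: "clifford n (Us t)"
    using Suc.prems by simp
  then have "Us t \<in> carrier_mat (2 ^ n) (2 ^ n)"
    unfolding clifford_def unitary_op_def by simp
  then have "Us t * noisy_circuit g n Us t (ketbra n y) * dagger (Us t) = pauli_expansion n {..<2 ^ n}
      (\<lambda>z. ketbra_coeff n y z * circuit_phase n Us (Suc t) z * complex_of_real (circuit_damping g n Us t z))
      (circuit_label n Us (Suc t))"
    using Suc V by (subst Suc.IH, simp, subst conj_pauli_expansion)
      (auto simp: clifford_conj_pauli_string(3) circuit_label_in_pauli_labels comp_def mult_ac)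
  then show ?case
    using Suc.prems
    by (simp add: depol_all_pauli_expansion circuit_label_in_pauli_labels circuit_damping_def
        atMost_Suc mult_ac del: circuit_label.simps circuit_phase.simps)
qed

section \<open>The collision probability bound\<close>

lemma mtrace_ketbra_mult:
  assumes "M \<in> carrier_mat (2 ^ n) (2 ^ n)" "x < 2 ^ n"
  shows "mtrace (ketbra n x * M) = M $$ (x, x)"
proof -
  have "mtrace (ketbra n x * M) = (\<Sum>i<2 ^ n. if i = x then M $$ (x, i) else 0)"
    unfolding mtrace_def using assms
    by (intro sum.cong) (auto simp: ketbra_def scalar_prod_def if_distrib[of "\<lambda>a. a * _"] sum.delta cong: if_cong)
  then show ?thesis
    using assms(2) by simp
qed

lemma mtrace_measurement:
  assumes U: "U \<in> carrier_mat (2 ^ n) (2 ^ n)" and \<rho>: "\<rho> \<in> carrier_mat (2 ^ n) (2 ^ n)" and "x < 2 ^ n"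
  shows "mtrace (dagger U * ketbra n x * U * \<rho>) = (U * \<rho> * dagger U) $$ (x, x)"
proof -
  have K: "ketbra n x \<in> carrier_mat (2 ^ n) (2 ^ n)"
    by (simp add: ketbra_def)
  have Ud: "dagger U \<in> carrier_mat (2 ^ n) (2 ^ n)"
    using dagger_carrier[OF U] .
  have "mtrace (dagger U * ketbra n x * U * \<rho>) = mtrace (dagger U * (ketbra n x * (U * \<rho>)))"
    using U \<rho> K Ud by (simp add: assoc_mult_mat[of _ "2 ^ n" "2 ^ n" _ "2 ^ n" _ "2 ^ n"])
  also have "\<dots> = mtrace (ketbra n x * (U * \<rho> * dagger U))"
    using U \<rho> K Ud
    by (subst mtrace_mult_comm[of _ "2 ^ n" "2 ^ n"]) (auto simp: assoc_mult_mat[of _ "2 ^ n" "2 ^ n" _ "2 ^ n" _ "2 ^ n"])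
  also have "\<dots> = (U * \<rho> * dagger U) $$ (x, x)"
    using U \<rho> Ud assms(3) by (intro mtrace_ketbra_mult) auto
  finally show ?thesis .
qed

text \<open>The squared outcome probabilities are squared diagonal entries of the rotated state,
  hence bounded by its squared Frobenius norm, which the rotation preserves.\<close>

lemma sum_measurement_sq_le:
  assumes U: "unitary_op (2 ^ n) U" and \<rho>: "\<rho> \<in> carrier_mat (2 ^ n) (2 ^ n)"
  shows "(\<Sum>x<2 ^ n. (Re (mtrace (dagger U * ketbra n x * U * \<rho>)))\<^sup>2) \<le> Re (hs_inner (2 ^ n) \<rho> \<rho>)"
proof -
  define M where "M = U * \<rho> * dagger U"
  have "(\<Sum>x<2 ^ n. (Re (mtrace (dagger U * ketbra n x * U * \<rho>)))\<^sup>2) = (\<Sum>x<2 ^ n. (Re (M $$ (x, x)))\<^sup>2)"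
    using U \<rho> unfolding unitary_op_def M_def by (intro sum.cong refl) (simp add: mtrace_measurement)
  also have "\<dots> \<le> (\<Sum>x<2 ^ n. (cmod (M $$ (x, x)))\<^sup>2)"
    by (intro sum_mono) (metis abs_Re_le_cmod abs_ge_zero power2_abs power_mono)
  also have "\<dots> \<le> (\<Sum>x<2 ^ n. \<Sum>c<2 ^ n. (cmod (M $$ (x, c)))\<^sup>2)"
    by (intro sum_mono member_le_sum) auto
  also have "\<dots> = Re (hs_inner (2 ^ n) M M)"
    by (simp add: hs_inner_self)
  also have "hs_inner (2 ^ n) M M = hs_inner (2 ^ n) \<rho> \<rho>"
    unfolding M_def by (rule hs_inner_unitary_conj[OF U \<rho> \<rho>])
  finally show ?thesis .
qed

lemma sum_out_prob_sq_le:
  assumes "\<forall>t<d. clifford n (Us t)" "y < 2 ^ n" "unitary_op (2 ^ n) U" "g \<le> 1"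
  shows "(\<Sum>x<2 ^ n. (out_prob g n Us d U y x)\<^sup>2) \<le> (\<Sum>z<2 ^ n. (circuit_damping g n Us d z)\<^sup>2) / 2 ^ n"
proof -
  define \<alpha> where "\<alpha> z = ketbra_coeff n y z * circuit_phase n Us d z * complex_of_real (circuit_damping g n Us d z)"
    for z
  have norm_\<alpha>: "cmod (\<alpha> z) = circuit_damping g n Us d z / 2 ^ n" for z
    unfolding \<alpha>_def using assms(1,4)
    by (simp add: norm_mult norm_ketbra_coeff norm_circuit_phase circuit_damping_nonneg)
  have "(\<Sum>x<2 ^ n. (out_prob g n Us d U y x)\<^sup>2)
      \<le> Re (hs_inner (2 ^ n) (pauli_expansion n {..<2 ^ n} \<alpha> (circuit_label n Us d))
                              (pauli_expansion n {..<2 ^ n} \<alpha> (circuit_label n Us d)))"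
    unfolding out_prob_def noisy_circuit_ketbra[OF assms(1,2)] \<alpha>_def[symmetric]
    by (rule sum_measurement_sq_le[OF assms(3) pauli_expansion_carrier])
  also have "\<dots> = Re (2 ^ n * (\<Sum>z<2 ^ n. cnj (\<alpha> z) * \<alpha> z))"
    using assms(1) inj_on_circuit_label circuit_label_in_pauli_labels
    by (subst hs_inner_pauli_expansion) auto
  also have "(\<Sum>z<2 ^ n. cnj (\<alpha> z) * \<alpha> z) = complex_of_real (\<Sum>z<2 ^ n. (cmod (\<alpha> z))\<^sup>2)"
    unfolding of_real_sum by (intro sum.cong refl) (metis complex_norm_square mult.commute)
  also have "Re (2 ^ n * complex_of_real (\<Sum>z<2 ^ n. (cmod (\<alpha> z))\<^sup>2)) = 2 ^ n * (\<Sum>z<2 ^ n. (cmod (\<alpha> z))\<^sup>2)"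
    by simp
  also have "\<dots> = (\<Sum>z<2 ^ n. (circuit_damping g n Us d z)\<^sup>2) / 2 ^ n"
    unfolding norm_\<alpha> power_divide sum_divide_distrib[symmetric] by (simp add: power2_eq_square)
  finally show ?thesis .
qed

lemma prod_le_sum_power_div_card:
  fixes x :: "'a \<Rightarrow> real"
  assumes "finite T" "T \<noteq> {}" "\<And>t. t \<in> T \<Longrightarrow> 0 \<le> x t"
  shows "(\<Prod>t\<in>T. x t) \<le> (\<Sum>t\<in>T. x t ^ card T / card T)"
proof -
  have m: "card T \<noteq> 0"
    using assms(1,2) by simp
  have P: "0 \<le> (\<Prod>t\<in>T. x t)"
    using assms(3) by (rule prod_nonneg)
  have "(\<Prod>t\<in>T. x t) = ((\<Prod>t\<in>T. x t) powr card T) powr (1 / card T)"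
    using P m by (simp add: powr_powr)
  also have "\<dots> = (\<Prod>t\<in>T. x t ^ card T) powr (1 / card T)"
    using P m by (simp add: powr_realpow' prod_power_distrib)
  also have "\<dots> \<le> (\<Sum>t\<in>T. x t ^ card T / card T)"
    using assms by (intro arith_geom_mean) auto
  finally show ?thesis .
qed

text \<open>AM-GM turns the product into an average of m-th powers (m = card T);
  injectivity bounds each of these sums by the sum over all of S.\<close>

lemma sum_prod_le_sum_power:
  fixes f :: "'s \<Rightarrow> real" and \<sigma> :: "'t \<Rightarrow> 'z \<Rightarrow> 's"
  assumes "finite T" "T \<noteq> {}" "finite S" "\<And>s. s \<in> S \<Longrightarrow> 0 \<le> f s"
    and "\<And>t. t \<in> T \<Longrightarrow> inj_on (\<sigma> t) Z" "\<And>t. t \<in> T \<Longrightarrow> \<sigma> t ` Z \<subseteq> S"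
  shows "(\<Sum>z\<in>Z. \<Prod>t\<in>T. f (\<sigma> t z)) \<le> (\<Sum>s\<in>S. f s ^ card T)"
proof -
  have "(\<Sum>z\<in>Z. \<Prod>t\<in>T. f (\<sigma> t z)) \<le> (\<Sum>z\<in>Z. \<Sum>t\<in>T. f (\<sigma> t z) ^ card T / card T)"
    using assms(1,2,4,6) by (intro sum_mono prod_le_sum_power_div_card) auto
  also have "\<dots> = (\<Sum>t\<in>T. (\<Sum>s\<in>\<sigma> t ` Z. f s ^ card T) / card T)"
    using assms(5) by (subst sum.swap) (simp add: sum_divide_distrib sum.reindex)
  also have "\<dots> \<le> (\<Sum>t\<in>T. (\<Sum>s\<in>S. f s ^ card T) / card T)"
    using assms(3,4,6) by (intro sum_mono divide_right_mono sum_mono2) auto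
  also have "\<dots> = (\<Sum>s\<in>S. f s ^ card T)"
    using assms(1,2) by simp
  finally show ?thesis .
qed

lemma sum_depol_factor_power:
  "(\<Sum>s\<in>pauli_labels n. depol_factor g n s ^ m) = (1 + 3 * (1 - g) ^ m) ^ n"
proof -
  have "(\<Sum>s\<in>pauli_labels n. depol_factor g n s ^ m)
      = (\<Sum>s\<in>pauli_labels n. \<Prod>k<n. if s k = 0 then 1 else (1 - g) ^ m)"
    unfolding depol_factor_def prod_power_distrib by (intro sum.cong refl prod.cong) auto
  also have "\<dots> = (\<Prod>k<n. \<Sum>v<4::nat. if v = 0 then 1 else (1 - g) ^ m)"
    unfolding pauli_labels_def by (subst prod_sum_PiE) auto
  also have "(\<Sum>v<4::nat. if v = 0 then 1 else (1 - g) ^ m) = 1 + 3 * (1 - g) ^ m"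
    by (simp add: numeral_eq_Suc)
  finally show ?thesis
    by simp
qed

lemma sum_circuit_damping_sq_le:
  assumes "\<forall>t<d. clifford n (Us t)" "g \<le> 1"
  shows "(\<Sum>z<2 ^ n. (circuit_damping g n Us d z)\<^sup>2) \<le> (1 + 3 * (1 - g) ^ (2 * Suc d)) ^ n"
proof -
  have "(\<Sum>z<2 ^ n. (circuit_damping g n Us d z)\<^sup>2)
      = (\<Sum>z<2 ^ n. \<Prod>t\<le>d. (\<lambda>s. (depol_factor g n s)\<^sup>2) (circuit_label n Us t z))"
    unfolding circuit_damping_def by (simp add: power2_eq_square prod.distrib)
  also have "\<dots> \<le> (\<Sum>s\<in>pauli_labels n. ((depol_factor g n s)\<^sup>2) ^ card {..d})"
    using assms inj_on_circuit_label circuit_label_in_pauli_labels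
    by (intro sum_prod_le_sum_power) (auto simp: finite_pauli_labels)
  also have "\<dots> = (\<Sum>s\<in>pauli_labels n. depol_factor g n s ^ (2 * Suc d))"
    by (simp only: card_atMost power_mult)
  also have "\<dots> = (1 + 3 * (1 - g) ^ (2 * Suc d)) ^ n"
    by (rule sum_depol_factor_power)
  finally show ?thesis .
qed

lemma one_plus_power_le_exp_3:
  fixes n d :: nat and g :: real
  assumes "1 \<le> n" "0 < g" "g \<le> 1" "ln (real n) / g \<le> real d"
  shows "(1 + 3 * (1 - g) ^ (2 * Suc d)) ^ n \<le> exp 3"
proof -
  have "(1 - g) ^ (2 * Suc d) \<le> (1 - g) ^ d"
    using assms(2,3) by (intro power_decreasing) auto
  also have "\<dots> \<le> exp (- g) ^ d"
    using assms(3) exp_ge_add_one_self[of "- g"] by (intro power_mono) auto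
  also have "\<dots> = exp (- (g * real d))"
    by (simp add: exp_of_nat_mult[symmetric] mult.commute)
  also have "\<dots> \<le> exp (- ln (real n))"
    using assms(2,4) by (simp add: divide_le_eq mult.commute)
  also have "\<dots> = 1 / real n"
    using assms(1) by (simp add: exp_minus inverse_eq_divide)
  finally have "(1 + 3 * (1 - g) ^ (2 * Suc d)) ^ n \<le> (1 + 3 / real n) ^ n"
    using assms(3) by (intro power_mono) auto
  also have "\<dots> \<le> exp (3 / real n) ^ n"
    using exp_ge_add_one_self[of "3 / real n"] by (intro power_mono) auto
  also have "\<dots> = exp 3"
    using assms(1) by (simp add: exp_of_nat_mult[symmetric])
  finally show ?thesis .
qed

theorem theorem5:
  "\<exists>c K :: real. \<forall>n \<ge> 1. \<forall>\<gamma>. 0 < \<gamma> \<and> \<gamma> \<le> 1 \<longrightarrow>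
     (\<forall>d Us U. real d \<ge> c * ln (real n) / \<gamma> \<longrightarrow>
        (\<forall>t<d. clifford n (Us t)) \<longrightarrow> unitary_op (2 ^ n) U \<longrightarrow>
        (1 / 2 ^ n) * (\<Sum>y<2 ^ n. \<Sum>x<2 ^ n. (out_prob \<gamma> n Us d U y x)\<^sup>2) \<le> K / 2 ^ n)"
proof (rule exI[of _ 1], rule exI[of _ "exp 3"], intro allI impI)
  fix n d :: nat and \<gamma> :: real and Us U
  assume n: "1 \<le> n" and \<gamma>: "0 < \<gamma> \<and> \<gamma> \<le> 1" and d: "1 * ln (real n) / \<gamma> \<le> real d"
    and cl: "\<forall>t<d. clifford n (Us t)" and U: "unitary_op (2 ^ n) U"
  have "(\<Sum>y<2 ^ n. \<Sum>x<2 ^ n. (out_prob \<gamma> n Us d U y x)\<^sup>2)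
      \<le> (\<Sum>y<(2::nat) ^ n. (\<Sum>z<2 ^ n. (circuit_damping \<gamma> n Us d z)\<^sup>2) / 2 ^ n)"
    using cl U \<gamma> by (intro sum_mono sum_out_prob_sq_le) auto
  also have "\<dots> = (\<Sum>z<2 ^ n. (circuit_damping \<gamma> n Us d z)\<^sup>2)"
    by simp
  also have "\<dots> \<le> (1 + 3 * (1 - \<gamma>) ^ (2 * Suc d)) ^ n"
    using cl \<gamma> by (intro sum_circuit_damping_sq_le) auto
  also have "\<dots> \<le> exp 3"
    using n \<gamma> d by (intro one_plus_power_le_exp_3) auto
  finally show "(1 / 2 ^ n) * (\<Sum>y<2 ^ n. \<Sum>x<2 ^ n. (out_prob \<gamma> n Us d U y x)\<^sup>2) \<le> exp 3 / 2 ^ n"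
    by (simp add: divide_right_mono)
qed

end
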